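(* Let a liquidity provider have a concave, increasing utility $U_P$ over terminal wealth, initial reserves $x_0$ of numeraire and $y_0$ of a yield token which pays a random amount $Y$ at maturity (expectations taken under her belief distribution for $Y$). Define $$p^S(\Delta)=\sup\{p\ge 0:\ \mathbb{E}[U_P(x_0+y_0Y)]\le \mathbb{E}[U_P(x_0+y_0Y+\Delta(Y-p))]\},$$ $$p^B(\Delta)=\inf\{p\ge 0:\ \mathbb{E}[U_P(x_0+y_0Y)]\le \mathbb{E}[U_P(x_0+y_0Y+\Delta(p-Y))]\},$$ $$\psi_S(x_0,y_0)=\{(x,y):\ y=y_0+\Delta,\ x=x_0-\Delta p^S(\Delta),\ \Delta\ge 0\},$$ $$\psi_B(x_0,y_0)=\{(x,y):\ y=y_0-\Delta,\ x=x_0+\Delta p^B(\Delta),\ \Delta\ge 0\}.$$ Then the curve $\psi(x_0,y_0,U_P,Y)=\psi_S\cup\psi_B$ is the optimally efficient bonding curve for the liquidity provider: for every point $(x,y)\in\psi$, $\mathbb{E}[U_P(x+yY)]=\mathbb{E}[U_P(x_0+y_0Y)]$.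
   Context: A bonding curve constrains the reserves $(x,y)$ of an automated market maker (numeraire and yield token) reachable by trades. It is called optimally efficient for the liquidity provider if the liquidity provider's expected utility of terminal wealth $x+yY$ does not change when a trader moves the reserves along the curve. *)

theory Defs
  imports "HOL-Probability.Probability"
begin

definition EU :: "'w measure \<Rightarrow> (real \<Rightarrow> real) \<Rightarrow> ('w \<Rightarrow> real) \<Rightarrow> real \<Rightarrow> real \<Rightarrow> real" where
  "EU M U Y x y = (\<integral>\<omega>. U (x + y * Y \<omega>) \<partial>M)"

definition pS :: "'w measure \<Rightarrow> (real \<Rightarrow> real) \<Rightarrow> ('w \<Rightarrow> real) \<Rightarrow> real \<Rightarrow> real \<Rightarrow> real \<Rightarrow> real" where
  "pS M U Y x0 y0 \<Delta> = Sup {p. p \<ge> 0 \<and>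
     EU M U Y x0 y0 \<le> (\<integral>\<omega>. U (x0 + y0 * Y \<omega> + \<Delta> * (Y \<omega> - p)) \<partial>M)}"

definition pB :: "'w measure \<Rightarrow> (real \<Rightarrow> real) \<Rightarrow> ('w \<Rightarrow> real) \<Rightarrow> real \<Rightarrow> real \<Rightarrow> real \<Rightarrow> real" where
  "pB M U Y x0 y0 \<Delta> = Inf {p. p \<ge> 0 \<and>
     EU M U Y x0 y0 \<le> (\<integral>\<omega>. U (x0 + y0 * Y \<omega> + \<Delta> * (p - Y \<omega>)) \<partial>M)}"

definition psiS :: "'w measure \<Rightarrow> (real \<Rightarrow> real) \<Rightarrow> ('w \<Rightarrow> real) \<Rightarrow> real \<Rightarrow> real \<Rightarrow> (real \<times> real) set" where
  "psiS M U Y x0 y0 = {(x, y). \<exists>\<Delta>\<ge>0. y = y0 + \<Delta> \<and> x = x0 - \<Delta> * pS M U Y x0 y0 \<Delta>}"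

definition psiB :: "'w measure \<Rightarrow> (real \<Rightarrow> real) \<Rightarrow> ('w \<Rightarrow> real) \<Rightarrow> real \<Rightarrow> real \<Rightarrow> (real \<times> real) set" where
  "psiB M U Y x0 y0 = {(x, y). \<exists>\<Delta>\<ge>0. y = y0 - \<Delta> \<and> x = x0 + \<Delta> * pB M U Y x0 y0 \<Delta>}"

definition psi :: "'w measure \<Rightarrow> (real \<Rightarrow> real) \<Rightarrow> ('w \<Rightarrow> real) \<Rightarrow> real \<Rightarrow> real \<Rightarrow> (real \<times> real) set" where
  "psi M U Y x0 y0 = psiS M U Y x0 y0 \<union> psiB M U Y x0 y0"

definition optimally_efficient :: "'w measure \<Rightarrow> (real \<Rightarrow> real) \<Rightarrow> ('w \<Rightarrow> real) \<Rightarrow> (real \<times> real) set \<Rightarrow> bool" where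
  "optimally_efficient M U Y C \<longleftrightarrow>
     (\<forall>(x, y)\<in>C. \<forall>(x', y')\<in>C. EU M U Y x y = EU M U Y x' y')"

end

theory Submission
  imports Defs
begin

text \<open>Fix \<open>\<Delta> > 0\<close>. After buying \<open>\<Delta>\<close> tokens at price \<open>p\<close> the expected utility
  \<open>\<phi>(p) = E U(x\<^sub>0 - \<Delta> p + (y\<^sub>0 + \<Delta>) Y)\<close> is continuous (by concavity of \<open>U\<close>) and strictly
  decreasing in \<open>p\<close>; it is at least the initial expected utility at \<open>p = 0\<close> (since \<open>Y \<ge> 0\<close>) and
  falls below it for large \<open>p\<close> (by dominated convergence). Hence the set of acceptable prices is an
  interval \<open>[0, q]\<close> whose end point \<open>q = p\<^sup>S(\<Delta>)\<close> restores the initial expected utility exactly.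
  Symmetrically, the acceptable selling prices form \<open>[p\<^sup>B(\<Delta>), \<infinity>)\<close>.\<close>

lemma strict_mono_Inf_superlevel:
  fixes \<phi> :: "real \<Rightarrow> real"
  assumes mono: "strict_mono \<phi>" and cont: "continuous_on UNIV \<phi>"
    and "\<phi> 0 \<le> c" "c \<le> \<phi> b"
  shows "\<phi> (Inf {p. 0 \<le> p \<and> c \<le> \<phi> p}) = c"
proof -
  have "0 \<le> b"
    using order_trans[OF assms(3,4)] by (simp add: strict_mono_less_eq[OF mono])
  then obtain q where q: "0 \<le> q" "\<phi> q = c"
    using IVT'[OF assms(3,4) _ continuous_on_subset[OF cont subset_UNIV]] by blast
  have "c \<le> \<phi> p \<longleftrightarrow> q \<le> p" for p
    using strict_mono_less_eq[OF mono, of q p] q(2) by simp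
  then have "{p. 0 \<le> p \<and> c \<le> \<phi> p} = {q..}"
    using q(1) by auto
  with q show ?thesis by simp
qed

lemma strict_antimono_on_Sup_superlevel:
  fixes \<phi> :: "real \<Rightarrow> real"
  assumes antimono: "strict_antimono_on UNIV \<phi>" and cont: "continuous_on UNIV \<phi>"
    and "c \<le> \<phi> 0" "\<phi> b \<le> c"
  shows "\<phi> (Sup {p. 0 \<le> p \<and> c \<le> \<phi> p}) = c"
proof -
  have "strict_mono (\<lambda>p. - \<phi> p)"
    by (intro monotone_onI) (simp add: monotone_onD[OF antimono])
  then have le_iff: "\<phi> p \<le> \<phi> q \<longleftrightarrow> q \<le> p" for p q
    using strict_mono_less_eq[of "\<lambda>p. - \<phi> p" q p] by simp
  have "0 \<le> b"
    using order_trans[OF assms(4,3)] by (simp add: le_iff)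
  then obtain q where q: "0 \<le> q" "\<phi> q = c"
    using IVT2'[OF assms(4,3) _ continuous_on_subset[OF cont subset_UNIV]] by blast
  have "c \<le> \<phi> p \<longleftrightarrow> p \<le> q" for p
    using le_iff[of q p] q(2) by simp
  then have "{p. 0 \<le> p \<and> c \<le> \<phi> p} = {0..q}"
    using q(1) by (simp add: set_eq_iff)
  with q show ?thesis by simp
qed

lemma eventually_less_integral:
  fixes f :: "nat \<Rightarrow> 'a \<Rightarrow> real"
  assumes f: "\<And>n. integrable M (f n)" and g: "integrable M g" and h: "integrable M h"
    and lower: "\<And>n. AE x in M. h x \<le> f n x"
    and eventually_above: "AE x in M. \<forall>\<^sub>F n in sequentially. g x \<le> f n x"
    and "c < integral\<^sup>L M g"
  shows "\<forall>\<^sub>F n in sequentially. c < integral\<^sup>L M (f n)"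
proof -
  \<comment> \<open>The truncations \<open>min (f n) g\<close> are dominated by \<open>|h| + |g|\<close>, and so converge in mean to \<open>g\<close>.\<close>
  define s where "s n x = min (f n x) (g x)" for n x
  have s_meas: "s n \<in> borel_measurable M" for n
    unfolding s_def using f g by measurable
  have s_lim: "AE x in M. (\<lambda>n. s n x) \<longlonglongrightarrow> g x"
    using eventually_above
    by (rule AE_mp) (auto intro!: AE_I2 tendsto_eventually elim: eventually_mono simp: s_def)
  have s_bound: "AE x in M. norm (s n x) \<le> \<bar>h x\<bar> + \<bar>g x\<bar>" for n
    using lower[of n] by (rule AE_mp) (auto intro!: AE_I2 simp: s_def)
  have "(\<lambda>n. integral\<^sup>L M (s n)) \<longlonglongrightarrow> integral\<^sup>L M g"
    using g h s_lim s_bound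
    by (intro integral_dominated_convergence[OF _ s_meas, where w = "\<lambda>x. \<bar>h x\<bar> + \<bar>g x\<bar>"]) auto
  then have s_above: "\<forall>\<^sub>F n in sequentially. c < integral\<^sup>L M (s n)"
    using \<open>c < integral\<^sup>L M g\<close> by (rule order_tendstoD(1))
  have s_le_f: "integral\<^sup>L M (s n) \<le> integral\<^sup>L M (f n)" for n
  proof (rule integral_mono)
    show "integrable M (s n)"
      using g h s_lim s_bound
      by (intro integrable_dominated_convergence2[OF _ s_meas, where w = "\<lambda>x. \<bar>h x\<bar> + \<bar>g x\<bar>"]) auto
  qed (auto simp: f s_def)
  show ?thesis
    by (rule eventually_mono[OF s_above]) (rule less_le_trans[OF _ s_le_f])
qed

lemma pS_eq_Sup:
  "pS M U Y x0 y0 \<Delta> = Sup {p. 0 \<le> p \<and> EU M U Y x0 y0 \<le> EU M U Y (x0 - \<Delta> * p) (y0 + \<Delta>)}"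
  unfolding pS_def EU_def by (simp add: algebra_simps)

lemma pB_eq_Inf:
  "pB M U Y x0 y0 \<Delta> = Inf {p. 0 \<le> p \<and> EU M U Y x0 y0 \<le> EU M U Y (x0 + \<Delta> * p) (y0 - \<Delta>)}"
  unfolding pB_def EU_def by (simp add: algebra_simps)

lemma optimally_efficientI:
  assumes "\<forall>(x, y)\<in>C. EU M U Y x y = e"
  shows "optimally_efficient M U Y C"
  using assms unfolding optimally_efficient_def by (simp add: case_prod_beta)

locale expected_utility = prob_space M
  for M :: "'w measure" +
  fixes U :: "real \<Rightarrow> real" and Y :: "'w \<Rightarrow> real"
  assumes integrable_utility: "\<And>a b. integrable M (\<lambda>\<omega>. U (a + b * Y \<omega>))"
begin

lemma EU_strict_mono_cash:
  assumes "strict_mono U" "a < a'"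
  shows "EU M U Y a b < EU M U Y a' b"
  unfolding EU_def using assms
  by (intro integral_less_AE_space integrable_utility) (auto simp: strict_mono_less emeasure_space_1)

lemma EU_mono_tokens:
  assumes "mono U" "AE \<omega> in M. 0 \<le> Y \<omega>" "b \<le> b'"
  shows "EU M U Y a b \<le> EU M U Y a b'"
  unfolding EU_def using assms(2)
  by (intro integral_mono_AE integrable_utility, rule AE_mp)
     (auto intro!: AE_I2 monoD[OF \<open>mono U\<close>] mult_right_mono \<open>b \<le> b'\<close>)

lemma concave_on_EU:
  assumes "concave_on UNIV U"
  shows "concave_on UNIV (\<lambda>a. EU M U Y a b)"
  unfolding concave_on_iff
proof (intro conjI ballI allI impI)
  fix x y u v :: real assume uv: "0 \<le> u" "0 \<le> v" "u + v = 1"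
  then have v: "v = 1 - u" by simp
  have "u * U (x + b * Y \<omega>) + v * U (y + b * Y \<omega>)
          \<le> U (u *\<^sub>R (x + b * Y \<omega>) + v *\<^sub>R (y + b * Y \<omega>))" for \<omega>
    using assms uv unfolding concave_on_iff by blast
  also have "u *\<^sub>R (x + b * Y \<omega>) + v *\<^sub>R (y + b * Y \<omega>) = u *\<^sub>R x + v *\<^sub>R y + b * Y \<omega>" for \<omega>
    unfolding v by (simp add: algebra_simps)
  finally have pointwise: "u * U (x + b * Y \<omega>) + v * U (y + b * Y \<omega>)
                             \<le> U (u *\<^sub>R x + v *\<^sub>R y + b * Y \<omega>)" for \<omega> .
  have "u * EU M U Y x b + v * EU M U Y y b
          = (\<integral>\<omega>. u * U (x + b * Y \<omega>) + v * U (y + b * Y \<omega>) \<partial>M)"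
    unfolding EU_def using integrable_utility by simp
  also have "\<dots> \<le> EU M U Y (u *\<^sub>R x + v *\<^sub>R y) b"
    unfolding EU_def using pointwise integrable_utility by (intro integral_mono) auto
  finally show "u * EU M U Y x b + v * EU M U Y y b \<le> EU M U Y (u *\<^sub>R x + v *\<^sub>R y) b" .
qed simp

lemma continuous_on_EU:
  assumes "concave_on UNIV U"
  shows "continuous_on UNIV (\<lambda>a. EU M U Y a b)"
proof -
  have "convex_on UNIV (\<lambda>a. - EU M U Y a b)"
    using concave_on_EU[OF assms] by (simp add: concave_on_def)
  then have "continuous_on UNIV (\<lambda>a. - (- EU M U Y a b))"
    by (intro continuous_on_minus convex_on_continuous) auto
  then show ?thesis by simp
qed

text \<open>The level \<open>c\<close> has to lie below an attained value because \<open>U\<close> may be bounded.\<close>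

lemma ex_EU_greater:
  assumes "mono U" "c < EU M U Y x y"
  shows "\<exists>a. c < EU M U Y a b"
proof -
  have "\<forall>\<^sub>F n in sequentially. c < (\<integral>\<omega>. U (real n + b * Y \<omega>) \<partial>M)"
  proof (rule eventually_less_integral[OF integrable_utility integrable_utility
        integrable_utility[of 0 b]])
    show "AE \<omega> in M. U (0 + b * Y \<omega>) \<le> U (real n + b * Y \<omega>)" for n
      by (intro AE_I2 monoD[OF assms(1)]) simp
    show "AE \<omega> in M. \<forall>\<^sub>F n in sequentially. U (x + y * Y \<omega>) \<le> U (real n + b * Y \<omega>)"
    proof (intro AE_I2 eventually_sequentiallyI)
      fix \<omega> n assume "nat \<lceil>x + (y - b) * Y \<omega>\<rceil> \<le> n"
      then have "x + (y - b) * Y \<omega> \<le> real n" by linarith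
      then have "x + y * Y \<omega> \<le> real n + b * Y \<omega>" by (simp add: algebra_simps)
      then show "U (x + y * Y \<omega>) \<le> U (real n + b * Y \<omega>)" using assms(1) by (rule monoD[rotated])
    qed
  qed (use assms(2) in \<open>simp add: EU_def\<close>)
  then obtain n where "c < (\<integral>\<omega>. U (real n + b * Y \<omega>) \<partial>M)"
    using eventually_happens'[OF sequentially_bot] by blast
  then show ?thesis unfolding EU_def by blast
qed

lemma ex_EU_less:
  assumes "mono U" "EU M U Y x y < c"
  shows "\<exists>a. EU M U Y a b < c"
proof -
  have "\<forall>\<^sub>F n in sequentially. - c < (\<integral>\<omega>. - U (- real n + b * Y \<omega>) \<partial>M)"
  proof (rule eventually_less_integral[OF integrable_minus[OF integrable_utility]
        integrable_minus[OF integrable_utility] integrable_minus[OF integrable_utility[of 0 b]]])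
    show "AE \<omega> in M. - U (0 + b * Y \<omega>) \<le> - U (- real n + b * Y \<omega>)" for n
      by (intro AE_I2 le_imp_neg_le monoD[OF assms(1)]) simp
    show "AE \<omega> in M. \<forall>\<^sub>F n in sequentially. - U (x + y * Y \<omega>) \<le> - U (- real n + b * Y \<omega>)"
    proof (intro AE_I2 eventually_sequentiallyI)
      fix \<omega> n assume "nat \<lceil>(b - y) * Y \<omega> - x\<rceil> \<le> n"
      then have "(b - y) * Y \<omega> - x \<le> real n" by linarith
      then have "- real n + b * Y \<omega> \<le> x + y * Y \<omega>" by (simp add: algebra_simps)
      then show "- U (x + y * Y \<omega>) \<le> - U (- real n + b * Y \<omega>)" using assms(1) by (auto dest: monoD)
    qed
  qed (use assms(2) in \<open>simp add: EU_def\<close>)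
  then obtain n where "- c < (\<integral>\<omega>. - U (- real n + b * Y \<omega>) \<partial>M)"
    using eventually_happens'[OF sequentially_bot] by blast
  then have "(\<integral>\<omega>. U (- real n + b * Y \<omega>) \<partial>M) < c" by simp
  then show ?thesis unfolding EU_def by blast
qed

lemma EU_at_pS:
  assumes "strict_mono U" "concave_on UNIV U" "AE \<omega> in M. 0 \<le> Y \<omega>" "0 \<le> \<Delta>"
  shows "EU M U Y (x0 - \<Delta> * pS M U Y x0 y0 \<Delta>) (y0 + \<Delta>) = EU M U Y x0 y0"
proof (cases "\<Delta> = 0")
  case False
  with \<open>0 \<le> \<Delta>\<close> have "0 < \<Delta>" by simp
  have "EU M U Y (x0 - 1) y0 < EU M U Y x0 y0"
    using EU_strict_mono_cash[OF assms(1)] by simp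
  then obtain a where a: "EU M U Y a (y0 + \<Delta>) < EU M U Y x0 y0"
    using ex_EU_less[OF strict_mono_mono[OF assms(1)]] by blast
  define \<phi> where "\<phi> p = EU M U Y (x0 - \<Delta> * p) (y0 + \<Delta>)" for p
  have "strict_antimono_on UNIV \<phi>"
    unfolding \<phi>_def using \<open>0 < \<Delta>\<close> by (intro monotone_onI EU_strict_mono_cash assms(1)) simp
  moreover have "continuous_on UNIV \<phi>"
    unfolding \<phi>_def
    by (intro continuous_on_compose2[OF continuous_on_EU[OF assms(2)]] continuous_intros) auto
  moreover have "EU M U Y x0 y0 \<le> \<phi> 0"
    unfolding \<phi>_def using EU_mono_tokens[OF strict_mono_mono[OF assms(1)] assms(3)] \<open>0 < \<Delta>\<close> by simp
  moreover have "\<phi> ((x0 - a) / \<Delta>) \<le> EU M U Y x0 y0"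
    unfolding \<phi>_def using a \<open>0 < \<Delta>\<close> by simp
  ultimately show ?thesis
    unfolding pS_eq_Sup \<phi>_def[symmetric] by (rule strict_antimono_on_Sup_superlevel)
qed simp

lemma EU_at_pB:
  assumes "strict_mono U" "concave_on UNIV U" "AE \<omega> in M. 0 \<le> Y \<omega>" "0 \<le> \<Delta>"
  shows "EU M U Y (x0 + \<Delta> * pB M U Y x0 y0 \<Delta>) (y0 - \<Delta>) = EU M U Y x0 y0"
proof (cases "\<Delta> = 0")
  case False
  with \<open>0 \<le> \<Delta>\<close> have "0 < \<Delta>" by simp
  have "EU M U Y x0 y0 < EU M U Y (x0 + 1) y0"
    using EU_strict_mono_cash[OF assms(1)] by simp
  then obtain a where a: "EU M U Y x0 y0 < EU M U Y a (y0 - \<Delta>)"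
    using ex_EU_greater[OF strict_mono_mono[OF assms(1)]] by blast
  define \<phi> where "\<phi> p = EU M U Y (x0 + \<Delta> * p) (y0 - \<Delta>)" for p
  have "strict_mono \<phi>"
    unfolding \<phi>_def using \<open>0 < \<Delta>\<close> by (intro monotone_onI EU_strict_mono_cash assms(1)) simp
  moreover have "continuous_on UNIV \<phi>"
    unfolding \<phi>_def
    by (intro continuous_on_compose2[OF continuous_on_EU[OF assms(2)]] continuous_intros) auto
  moreover have "\<phi> 0 \<le> EU M U Y x0 y0"
    unfolding \<phi>_def using EU_mono_tokens[OF strict_mono_mono[OF assms(1)] assms(3)] \<open>0 < \<Delta>\<close> by simp
  moreover have "EU M U Y x0 y0 \<le> \<phi> ((a - x0) / \<Delta>)"
    unfolding \<phi>_def using a \<open>0 < \<Delta>\<close> by simp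
  ultimately show ?thesis
    unfolding pB_eq_Inf \<phi>_def[symmetric] by (rule strict_mono_Inf_superlevel)
qed simp

end

theorem theorem16:
  fixes M :: "'w measure" and U :: "real \<Rightarrow> real" and Y :: "'w \<Rightarrow> real"
    and x0 y0 :: real
  assumes "prob_space M"
    and "Y \<in> borel_measurable M"
    and "AE \<omega> in M. Y \<omega> \<ge> 0"
    and "concave_on UNIV U"
    and "strict_mono U"
    and "\<And>a b. integrable M (\<lambda>\<omega>. U (a + b * Y \<omega>))"
  shows "(\<forall>(x, y)\<in>psi M U Y x0 y0. EU M U Y x y = EU M U Y x0 y0)
         \<and> optimally_efficient M U Y (psi M U Y x0 y0)"
proof -
  interpret expected_utility M U Y
    using assms by (simp add: expected_utility_def expected_utility_axioms_def)
  have "EU M U Y (x0 - \<Delta> * pS M U Y x0 y0 \<Delta>) (y0 + \<Delta>) = EU M U Y x0 y0"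
    and "EU M U Y (x0 + \<Delta> * pB M U Y x0 y0 \<Delta>) (y0 - \<Delta>) = EU M U Y x0 y0"
    if "0 \<le> \<Delta>" for \<Delta>
    using EU_at_pS[OF assms(5,4,3) that] EU_at_pB[OF assms(5,4,3) that] by simp_all
  then have "\<forall>(x, y)\<in>psi M U Y x0 y0. EU M U Y x y = EU M U Y x0 y0"
    unfolding psi_def psiS_def psiB_def by auto
  then show ?thesis by (blast intro: optimally_efficientI)
qed

end
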